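(* Let $R$ be a $*$-ring. Then $R$ is strongly $*$-clean and $\pi$-regular if and only if $R$ is strongly $\pi$-$*$-regular.
   Context: A $*$-ring is a ring with identity with an involution $*$. A projection is $p$ with $p^2=p=p^*$. $R$ is strongly $*$-clean if each element is a sum of a projection and a unit commuting with each other. $R$ is $\pi$-regular if for each $a$ there exist $n\ge1$ and $b$ with $a^n=a^nba^n$. $R$ is strongly $\pi$-$*$-regular if for every $a$ there exist a projection $e$, a unit $u$ and $m\ge1$ with $a^m=eu$ and $a,e,u$ pairwise commuting. *)

theory Defs
  imports Main
begin

class star_ring = ring_1 +
  fixes star :: "'a \<Rightarrow> 'a"
  assumes star_add: "star (x + y) = star x + star y"
    and star_mult: "star (x * y) = star y * star x"
    and star_star: "star (star x) = x"

context star_ring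
begin

definition is_unit :: "'a \<Rightarrow> bool" where
  "is_unit u \<longleftrightarrow> (\<exists>v. u * v = 1 \<and> v * u = 1)"

definition projection :: "'a \<Rightarrow> bool" where
  "projection p \<longleftrightarrow> p * p = p \<and> p = star p"

definition strongly_star_clean :: "'a itself \<Rightarrow> bool" where
  "strongly_star_clean _ \<longleftrightarrow>
     (\<forall>a. \<exists>p u. projection p \<and> is_unit u \<and> a = p + u \<and> p * u = u * p)"

definition pi_regular :: "'a itself \<Rightarrow> bool" where
  "pi_regular _ \<longleftrightarrow> (\<forall>a. \<exists>n b. n \<ge> 1 \<and> a ^ n = a ^ n * b * a ^ n)"

definition strongly_pi_star_regular :: "'a itself \<Rightarrow> bool" where
  "strongly_pi_star_regular _ \<longleftrightarrow>
     (\<forall>a. \<exists>e u m. projection e \<and> is_unit u \<and> m \<ge> 1 \<and> a ^ m = e * u \<and>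
        a * e = e * a \<and> a * u = u * a \<and> e * u = u * e)"

end

end

theory Submission
  imports Defs
begin

text \<open>In a strongly \<open>*\<close>-clean ring every idempotent \<open>e\<close> is a projection: writing
  \<open>e = p + w\<close>, the unit \<open>w = e - p\<close> is a difference of commuting idempotents, which forces
  \<open>e p = 0\<close> and \<open>e = 1 - p\<close>. Then \<open>e + e r (1 - e)\<close> is idempotent, hence self-adjoint,
  which gives \<open>e r (1 - e) = 0\<close>; so idempotents are central. With central idempotents a
  regular power \<open>x = a\<^sup>n = x b x\<close> factors as \<open>(x b) (x + 1 - x b)\<close> with the second factor a unit.
  Conversely, if \<open>a\<^sup>m = e u\<close>, then \<open>a e + (1 - e)\<close> has a unit \<open>m\<close>-th power and \<open>a (1 - e)\<close> is
  nilpotent, so \<open>a - (1 - e) = (a e + 1 - e) (2 e - 1) (1 - a (1 - e))\<close> is a unit commuting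
  with the projection \<open>1 - e\<close>.\<close>

context star_ring
begin

lemma star_one: "star 1 = 1"
  by (metis mult_1_left mult_1_right star_mult star_star)

lemma star_diff: "star (x - y) = star x - star y"
  by (metis add_diff_cancel diff_add_cancel star_add)

lemma projection_one_minus: "projection e \<Longrightarrow> projection (1 - e)"
  by (simp add: projection_def star_diff star_one algebra_simps)

lemma is_unit_mult: "is_unit a \<Longrightarrow> is_unit b \<Longrightarrow> is_unit (a * b)"
  unfolding is_unit_def by (metis mult.assoc mult_1_left)

lemma is_unit_mult_eq_0D: "is_unit w \<Longrightarrow> w * x = 0 \<Longrightarrow> x = 0"
  unfolding is_unit_def by (metis mult.assoc mult_1_left mult_zero_right)

lemma is_unit_of_power:
  assumes "is_unit (w ^ Suc k)"
  shows "is_unit w"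
proof -
  obtain z where "w ^ Suc k * z = 1" "z * w ^ Suc k = 1"
    using assms unfolding is_unit_def by blast
  moreover have "w ^ Suc k = w * w ^ k" "w ^ Suc k = w ^ k * w"
    by (rule power_Suc, rule power_Suc2)
  ultimately have right: "w * (w ^ k * z) = 1" and left: "(z * w ^ k) * w = 1"
    by (simp_all add: mult.assoc)
  then have "z * w ^ k = w ^ k * z"
    by (metis mult.assoc mult_1_left mult_1_right)
  then show ?thesis
    unfolding is_unit_def using left right by metis
qed

lemma one_minus_mult_geometric_sum: "(1 - x) * (\<Sum>i<k. x ^ i) = 1 - x ^ k"
proof (induction k)
  case (Suc k)
  have "(1 - x) * (\<Sum>i<Suc k. x ^ i) = 1 - x ^ k + (1 - x) * x ^ k"
    using Suc by (simp add: distrib_left)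
  then show ?case by (simp add: algebra_simps)
qed simp

lemma geometric_sum_mult_one_minus: "(\<Sum>i<k. x ^ i) * (1 - x) = 1 - x ^ k"
proof (induction k)
  case (Suc k)
  have "(\<Sum>i<Suc k. x ^ i) * (1 - x) = 1 - x ^ k + x ^ k * (1 - x)"
    using Suc by (simp add: distrib_right)
  then show ?case by (simp add: algebra_simps power_Suc2 del: power_Suc)
qed simp

lemma is_unit_one_minus_nilpotent: "x ^ k = 0 \<Longrightarrow> is_unit (1 - x)"
  unfolding is_unit_def
  using one_minus_mult_geometric_sum[of x k] geometric_sum_mult_one_minus[of x k] by auto

lemma is_unit_inverse_commute:
  assumes "u * v = 1" "v * u = 1" "a * u = u * a"
  shows "a * v = v * a"
  by (metis assms mult.assoc mult_1_left mult_1_right)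

lemma power_mult_idempotent:
  assumes "e * e = e" "a * e = e * a"
  shows "(a * e) ^ Suc k = a ^ Suc k * e"
proof (induction k)
  case (Suc k)
  have "(a * e) ^ Suc (Suc k) = a * (e * a ^ Suc k) * e"
    using Suc by (simp only: power_Suc[of "a * e"] mult.assoc)
  also have "\<dots> = a * a ^ Suc k * (e * e)"
    using power_commuting_commutes[OF assms(2), of "Suc k"] by (metis mult.assoc)
  finally show ?case
    using assms(1) by (simp only: power_Suc[of a "Suc k"])
qed simp

lemma power_add_orthogonal_idempotent:
  assumes "y * f = 0" "f * y = 0" "f * f = f"
  shows "(y + f) ^ Suc k = y ^ Suc k + f"
proof (induction k)
  case (Suc k)
  have "f * y ^ Suc k = 0"
    using assms(2) by (simp add: mult.assoc[symmetric])
  then show ?case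
    using Suc assms by (simp add: algebra_simps)
qed simp

lemma is_unit_idempotent_corner:
  assumes "e * e = e" "is_unit u" "e * u = u * e"
  shows "is_unit (e * u + (1 - e))"
proof -
  obtain v where uv: "u * v = 1" "v * u = 1"
    using assms(2) unfolding is_unit_def by blast
  have ev: "e * v = v * e"
    using is_unit_inverse_commute[OF uv assms(3)] .
  have "(e * u + (1 - e)) * (e * v + (1 - e)) = 1"
    using assms(1,3) uv ev by (simp add: algebra_simps mult.assoc[symmetric])
  moreover have "(e * v + (1 - e)) * (e * u + (1 - e)) = 1"
    using assms(1,3) uv ev by (simp add: algebra_simps mult.assoc[symmetric])
  ultimately show ?thesis
    unfolding is_unit_def by blast
qed

lemma is_unit_minus_complement:
  assumes ee: "e * e = e" and ae: "a * e = e * a"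
    and u: "is_unit u" "e * u = u * e" and power: "a ^ Suc k = e * u"
  shows "is_unit (a - (1 - e))"
proof -
  define f where "f = 1 - e"
  have ff: "f * f = f" and ef: "e * f = 0" and fe: "f * e = 0" and ef1: "e + f = 1"
    and af: "a * f = f * a" and uf: "u * f = f * u"
    using ee ae u(2) unfolding f_def by (simp_all add: algebra_simps)
  have "a * e * f = 0" "f * (a * e) = 0"
    using ef fe af by (metis mult.assoc mult_zero_right)+
  then have "(a * e + f) ^ Suc k = a ^ Suc k * e + f"
    using power_add_orthogonal_idempotent[OF _ _ ff] power_mult_idempotent[OF ee ae] by simp
  also have "\<dots> = e * u + f"
    using power ee u(2) by (metis mult.assoc)
  finally have unit_ae: "is_unit (a * e + f)"
    using is_unit_of_power is_unit_idempotent_corner[OF ee u] unfolding f_def by metis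
  have "(a * f) ^ Suc k = e * u * f"
    using power_mult_idempotent[OF ff af] power by simp
  also have "\<dots> = 0"
    using uf ef by (metis mult.assoc mult_zero_left)
  finally have unit_af: "is_unit (1 - a * f)"
    by (rule is_unit_one_minus_nilpotent)
  have "(e - f) * (e - f) = 1"
    using ee ff ef fe ef1 by (simp add: algebra_simps)
  then have unit_ef: "is_unit (e - f)"
    unfolding is_unit_def by blast
  have "(a * e + f) * (e - f) = a * e - f"
    using ee ff ef fe by (simp add: algebra_simps mult.assoc)
  moreover have "(a * e - f) * (1 - a * f) = a * e + a * f - f"
  proof -
    have "a * e * (a * f) = a * a * (e * f)"
      using ae by (metis mult.assoc)
    moreover have "f * (a * f) = a * (f * f)"
      using af by (metis mult.assoc)
    ultimately have "a * e * (a * f) = 0" "f * (a * f) = a * f"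
      using ef ff by simp_all
    then show ?thesis by (simp add: algebra_simps)
  qed
  moreover have "a * e + a * f = a"
    using ef1 by (metis distrib_left mult_1_right)
  ultimately have "(a * e + f) * (e - f) * (1 - a * f) = a - f"
    by simp
  then show ?thesis
    using is_unit_mult[OF is_unit_mult[OF unit_ae unit_ef] unit_af] unfolding f_def by simp
qed

lemma commuting_idempotents_complementary:
  assumes ee: "e * e = e" and pp: "p * p = p" and ep: "e * p = p * e"
    and unit: "is_unit (e - p)"
  shows "e + p = 1"
proof -
  have "e * (e * p) = e * p" "p * (e * p) = e * p"
    using ee pp ep by (metis mult.assoc)+
  then have "(e - p) * (e * p) = 0"
    by (simp add: algebra_simps)
  then have ep0: "e * p = 0"
    using is_unit_mult_eq_0D[OF unit] by blast
  have "(e - p) * (e + p - 1) = 0"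
    using ee pp ep ep0 by (simp add: algebra_simps)
  then have "e + p - 1 = 0"
    using is_unit_mult_eq_0D[OF unit] by blast
  then show ?thesis
    by simp
qed

lemma strongly_star_clean_idempotent_projection:
  assumes "strongly_star_clean TYPE('a)" and ee: "e * e = e"
  shows "projection e"
proof -
  obtain p w where p: "projection p" and w: "is_unit w" "e = p + w" "p * w = w * p"
    using assms(1) unfolding strongly_star_clean_def by blast
  have "e * p = p * e"
    using w(2,3) by (simp add: algebra_simps)
  moreover have "is_unit (e - p)"
    using w by simp
  ultimately have "e = 1 - p"
    using commuting_idempotents_complementary[OF ee] p
    unfolding projection_def by (simp add: eq_diff_eq)
  then show ?thesis
    using projection_one_minus[OF p] by simp
qed

lemma idempotent_corner_zero:
  assumes selfadjoint: "\<And>g. g * g = g \<Longrightarrow> star g = g" and ee: "e * e = e"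
  shows "e * r * (1 - e) = 0"
proof -
  define f where "f = 1 - e"
  have ef: "e * f = 0" and fe: "f * e = 0" and se: "star e = e" and sf: "star f = f"
    using ee selfadjoint[OF ee] unfolding f_def by (simp_all add: algebra_simps star_diff star_one)
  define g where "g = e + e * r * f"
  have "e * (e * X) = e * X" "f * (e * X) = 0" for X
    using ee fe by (metis mult.assoc mult_zero_left)+
  then have "e * (e * r * f) = e * r * f" "e * r * f * e = 0" "e * r * f * (e * r * f) = 0"
    using fe by (simp_all add: mult.assoc)
  then have "g * g = g"
    unfolding g_def using ee by (simp add: algebra_simps)
  moreover have "star g = e + f * star r * e"
    unfolding g_def using se sf by (simp add: star_add star_mult mult.assoc)
  ultimately have "e * r * f = f * star r * e"
    using selfadjoint unfolding g_def by force
  then have "e * r * f = e * (f * star r * e)"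
    using ee by (metis mult.assoc)
  then show ?thesis
    using ef unfolding f_def by (simp add: mult.assoc flip: mult.assoc)
qed

lemma idempotent_central:
  assumes selfadjoint: "\<And>g. g * g = g \<Longrightarrow> star g = g" and ee: "e * e = e"
  shows "e * r = r * e"
proof -
  have "(1 - e) * (1 - e) = 1 - e"
    using ee by (simp add: algebra_simps)
  from idempotent_corner_zero[OF selfadjoint this, of r]
  have "(1 - e) * r * e = 0"
    by (simp add: algebra_simps)
  moreover have "e * r * (1 - e) = 0"
    using idempotent_corner_zero[OF selfadjoint ee] .
  ultimately show ?thesis
    by (simp add: algebra_simps)
qed

lemma is_unit_regular_central:
  assumes central: "\<And>g r. g * g = g \<Longrightarrow> g * r = r * g" and xbx: "x * b * x = x"
  shows "is_unit (x + (1 - x * b))"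
proof -
  define e where "e = x * b"
  define f where "f = 1 - e"
  have ee: "e * e = e" and hh: "b * x * (b * x) = b * x"
    unfolding e_def using xbx by (metis mult.assoc)+
  have ex: "e * x = x" and xe: "x * e = x"
    using xbx central[OF ee] unfolding e_def by metis+
  have "e = x * (b * x) * b"
    using xbx unfolding e_def by (simp add: mult.assoc)
  also have "\<dots> = b * x * e"
    using central[OF hh, of x] unfolding e_def by (metis mult.assoc)
  also have "\<dots> = b * x"
    using xe by (simp add: mult.assoc)
  finally have bx: "b * x = e" ..
  have ff: "f * f = f" and ef: "e * f = 0" and fe: "f * e = 0" and ef1: "e + f = 1"
    using ee unfolding f_def by (simp_all add: algebra_simps)
  have "x * f = 0" "f * (b * e) = 0" "x * (b * e) = e"
    using xe fe ee central[OF ee, of b] unfolding f_def e_def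
    by (simp_all add: algebra_simps) (metis mult.assoc)+
  then have "(x + f) * (b * e + f) = 1"
    using ff ef1 by (simp add: distrib_left distrib_right)
  moreover have "b * e * x = e" "b * e * f = 0" "f * x = 0"
    using ex ef bx unfolding f_def by (simp_all add: algebra_simps mult.assoc)
  then have "(b * e + f) * (x + f) = 1"
    using ff ef1 by (simp add: distrib_left distrib_right)
  ultimately show ?thesis
    unfolding is_unit_def e_def f_def by blast
qed

lemma strongly_pi_star_regular_imp_pi_regular:
  assumes "strongly_pi_star_regular TYPE('a)"
  shows "pi_regular TYPE('a)"
  unfolding pi_regular_def
proof
  fix a :: 'a
  obtain e u m where "projection e" "is_unit u" "m \<ge> 1" and power: "a ^ m = e * u"
    using assms unfolding strongly_pi_star_regular_def by blast
  then obtain v where "u * v = 1" and ee: "e * e = e"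
    unfolding is_unit_def projection_def by blast
  have "a ^ m * v * a ^ m = e * (u * v) * e * u"
    using power by (simp add: mult.assoc)
  then have "a ^ m * v * a ^ m = a ^ m"
    using power \<open>u * v = 1\<close> ee by simp
  then show "\<exists>n b. n \<ge> 1 \<and> a ^ n = a ^ n * b * a ^ n"
    using \<open>m \<ge> 1\<close> by metis
qed

lemma strongly_pi_star_regular_imp_strongly_star_clean:
  assumes "strongly_pi_star_regular TYPE('a)"
  shows "strongly_star_clean TYPE('a)"
  unfolding strongly_star_clean_def
proof
  fix a :: 'a
  obtain e u m where e: "projection e" and u: "is_unit u" "e * u = u * e" and "m \<ge> 1"
    and power: "a ^ m = e * u" and ae: "a * e = e * a"
    using assms unfolding strongly_pi_star_regular_def by blast
  then obtain k where "m = Suc k"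
    using not0_implies_Suc by fastforce
  then have "is_unit (a - (1 - e))"
    using is_unit_minus_complement[OF _ ae u] power e unfolding projection_def by simp
  moreover have "(1 - e) * (a - (1 - e)) = (a - (1 - e)) * (1 - e)"
    using ae by (simp add: algebra_simps)
  moreover have "a = (1 - e) + (a - (1 - e))"
    by (simp add: algebra_simps)
  ultimately show "\<exists>p w. projection p \<and> is_unit w \<and> a = p + w \<and> p * w = w * p"
    using projection_one_minus[OF e] by blast
qed

lemma strongly_star_clean_pi_regular_imp_strongly_pi_star_regular:
  assumes clean: "strongly_star_clean TYPE('a)" and regular: "pi_regular TYPE('a)"
  shows "strongly_pi_star_regular TYPE('a)"
  unfolding strongly_pi_star_regular_def
proof
  fix a :: 'a
  obtain n b where "n \<ge> 1" and xbx: "a ^ n * b * a ^ n = a ^ n"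
    using regular unfolding pi_regular_def by metis
  have central: "\<And>g r. g * g = g \<Longrightarrow> g * r = r * g"
    using idempotent_central strongly_star_clean_idempotent_projection[OF clean]
    unfolding projection_def by metis
  define e where "e = a ^ n * b"
  define u where "u = a ^ n + (1 - e)"
  have ee: "e * e = e"
    using xbx unfolding e_def by (metis mult.assoc)
  have "is_unit u"
    using is_unit_regular_central[OF central xbx] unfolding u_def e_def .
  moreover have "a ^ n = e * u"
    using xbx ee unfolding u_def e_def by (simp add: algebra_simps)
  moreover have "a * u = u * a"
    using central[OF ee, of a] unfolding u_def by (simp add: algebra_simps power_commutes)
  ultimately show "\<exists>e u m. projection e \<and> is_unit u \<and> m \<ge> 1 \<and> a ^ m = e * u \<and>
      a * e = e * a \<and> a * u = u * a \<and> e * u = u * e"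
    using strongly_star_clean_idempotent_projection[OF clean ee] central[OF ee] \<open>n \<ge> 1\<close>
    by metis
qed

end

theorem corollary3p8:
  "(strongly_star_clean TYPE('a::star_ring) \<and> pi_regular TYPE('a))
     \<longleftrightarrow> strongly_pi_star_regular TYPE('a)"
  using strongly_star_clean_pi_regular_imp_strongly_pi_star_regular
    strongly_pi_star_regular_imp_strongly_star_clean strongly_pi_star_regular_imp_pi_regular
  by blast

end
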